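(* Let $\rho>0$, $\epsilon_0>0$, and $0<\lambda_1<\lambda_2$ with $\lambda_1(1+\epsilon_0)\neq\lambda_2$. For $\beta$ with $\frac{\epsilon_0}{1+\epsilon_0}<\beta<1$ (equivalently $\beta>(1-\beta)\epsilon_0$, $\beta<1$) define $A(\beta)=\frac{\epsilon_0}{\rho[\beta-(1-\beta)\epsilon_0]}$, $B(\beta)=\frac{\epsilon_0}{\rho(1-\beta)}$, $\zeta(\beta)=\max\{A(\beta),B(\beta)\}$. Then the minimization problem $$\min_\beta\ 1-e^{-(\lambda_2A(\beta)+\lambda_1\zeta(\beta))}\quad\text{s.t. } 0\le\beta\le1,\ \beta>(1-\beta)\epsilon_0$$ has optimal solution $$\beta^*=\frac{\sqrt{1+\epsilon_0}\,(\epsilon_0\lambda_1-\lambda_2)+\sqrt{\lambda_1\lambda_2}}{\sqrt{1+\epsilon_0}\,[\lambda_1(1+\epsilon_0)-\lambda_2]}.$$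
   Context: Interpretation: downlink two-user NOMA with users at distances $d_1<d_2$, $\lambda_k=d_k^\alpha$ ($\alpha>0$ the path loss exponent), transmit SNR $\rho$, target SNR $\epsilon_0=2^{R_0^*}-1$, and $\beta$ the power fraction given to the farther user; the objective is the common outage probability when the users are ordered correctly. At $\beta=1$, $B$ is infinite and the objective is interpreted as $1$. *)

theory Defs
  imports Complex_Main
begin

definition noma_A :: "real \<Rightarrow> real \<Rightarrow> real \<Rightarrow> real" where
  "noma_A rho eps0 b = eps0 / (rho * (b - (1 - b) * eps0))"

definition noma_B :: "real \<Rightarrow> real \<Rightarrow> real \<Rightarrow> real" where
  "noma_B rho eps0 b = eps0 / (rho * (1 - b))"

definition noma_zeta :: "real \<Rightarrow> real \<Rightarrow> real \<Rightarrow> real" where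
  "noma_zeta rho eps0 b = max (noma_A rho eps0 b) (noma_B rho eps0 b)"

text \<open>Objective; at beta = 1 the quantity B is infinite and the objective is taken to be 1.\<close>
definition noma_obj :: "real \<Rightarrow> real \<Rightarrow> real \<Rightarrow> real \<Rightarrow> real \<Rightarrow> real" where
  "noma_obj rho eps0 l1 l2 b =
     (if b = 1 then 1
      else 1 - exp (- (l2 * noma_A rho eps0 b + l1 * noma_zeta rho eps0 b)))"

definition noma_feasible :: "real \<Rightarrow> real \<Rightarrow> bool" where
  "noma_feasible eps0 b \<longleftrightarrow> 0 \<le> b \<and> b \<le> 1 \<and> b > (1 - b) * eps0"

end

theory Submission
  imports Defs
begin

text \<open>Substituting \<open>u = \<beta> - (1 - \<beta>) \<epsilon>\<^sub>0\<close> and \<open>v = 1 - \<beta>\<close> turns the constraint into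
  \<open>u + (1 + \<epsilon>\<^sub>0) v = 1\<close> with \<open>u, v > 0\<close>, and the exponent of the objective is at least
  \<open>(\<epsilon>\<^sub>0/\<rho>) (\<lambda>\<^sub>2/u + \<lambda>\<^sub>1/v)\<close> because \<open>\<zeta> \<ge> B\<close>. By the Engel form of Cauchy-Schwarz this is
  at least \<open>(\<epsilon>\<^sub>0/\<rho>) (\<surd>\<lambda>\<^sub>2 + \<surd>((1 + \<epsilon>\<^sub>0) \<lambda>\<^sub>1))\<^sup>2\<close>. The bound is attained when \<open>u\<close> and
  \<open>(1 + \<epsilon>\<^sub>0) v\<close> are proportional to \<open>\<surd>\<lambda>\<^sub>2\<close> and \<open>\<surd>((1 + \<epsilon>\<^sub>0) \<lambda>\<^sub>1)\<close>, which is \<open>\<beta>\<^sup>*\<close>; there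
  \<open>\<lambda>\<^sub>1 < \<lambda>\<^sub>2\<close> gives \<open>A \<le> B\<close>, so \<open>\<zeta> = B\<close> and nothing is lost. Since \<open>1 - exp (-x)\<close> is
  increasing, \<open>\<beta>\<^sup>*\<close> minimises the outage probability.\<close>

definition noma_exponent :: "real \<Rightarrow> real \<Rightarrow> real \<Rightarrow> real \<Rightarrow> real \<Rightarrow> real" where
  "noma_exponent rho eps0 l1 l2 b = l2 * noma_A rho eps0 b + l1 * noma_zeta rho eps0 b"

lemma square_sum_le_sum_div_mult_sum:
  fixes x y u v :: real
  assumes "0 < u" and "0 < v"
  shows "(x + y)\<^sup>2 \<le> (x\<^sup>2 / u + y\<^sup>2 / v) * (u + v)"
proof -
  have "(x\<^sup>2 / u + y\<^sup>2 / v) * (u + v) - (x + y)\<^sup>2 = (x * v - y * u)\<^sup>2 / (u * v)"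
    using assms by (simp add: field_simps power2_eq_square)
  also have "\<dots> \<ge> 0"
    using assms by simp
  finally show ?thesis
    by simp
qed

lemma noma_exponent_lower_bound:
  fixes rho eps0 l1 l2 b :: real
  assumes "rho > 0" and "eps0 > 0" and "0 \<le> l1" and "0 \<le> l2"
    and "noma_feasible eps0 b" and "b \<noteq> 1"
  shows "eps0 / rho * (sqrt l2 + sqrt ((1 + eps0) * l1))\<^sup>2 \<le> noma_exponent rho eps0 l1 l2 b"
proof -
  define u where "u = b - (1 - b) * eps0"
  define v where "v = 1 - b"
  have "u > 0" and "v > 0"
    using assms(5,6) by (auto simp: noma_feasible_def u_def v_def)
  have "u + (1 + eps0) * v = 1"
    by (simp add: u_def v_def algebra_simps)
  have "(sqrt l2 + sqrt ((1 + eps0) * l1))\<^sup>2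
      \<le> (l2 / u + ((1 + eps0) * l1) / ((1 + eps0) * v)) * (u + (1 + eps0) * v)"
    using square_sum_le_sum_div_mult_sum[of u "(1 + eps0) * v" "sqrt l2" "sqrt ((1 + eps0) * l1)"]
      \<open>u > 0\<close> \<open>v > 0\<close> assms(2-4) by simp
  also have "\<dots> = l2 / u + l1 / v"
    using \<open>u + (1 + eps0) * v = 1\<close> assms(2) by simp
  finally have "eps0 / rho * (sqrt l2 + sqrt ((1 + eps0) * l1))\<^sup>2 \<le> eps0 / rho * (l2 / u + l1 / v)"
    using assms(1,2) by (intro mult_left_mono) auto
  also have "\<dots> = l2 * (eps0 / (rho * u)) + l1 * (eps0 / (rho * v))"
    using \<open>u > 0\<close> \<open>v > 0\<close> assms(1) by (simp add: field_simps)
  also have "\<dots> = l2 * noma_A rho eps0 b + l1 * noma_B rho eps0 b"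
    by (simp add: noma_A_def noma_B_def u_def v_def)
  also have "\<dots> \<le> noma_exponent rho eps0 l1 l2 b"
    using assms(3) by (simp add: noma_exponent_def noma_zeta_def mult_left_mono)
  finally show ?thesis .
qed

text \<open>Rationalising the denominator of \<open>\<beta>\<^sup>*\<close> by \<open>s\<^sup>2 \<lambda>\<^sub>1 - \<lambda>\<^sub>2 = (s \<surd>\<lambda>\<^sub>1 - \<surd>\<lambda>\<^sub>2)(s \<surd>\<lambda>\<^sub>1 + \<surd>\<lambda>\<^sub>2)\<close>.\<close>

lemma noma_bstar_eq:
  fixes eps0 l1 l2 :: real
  assumes "eps0 > 0" and "0 < l1" and "0 < l2" and "l1 * (1 + eps0) \<noteq> l2"
  defines "s \<equiv> sqrt (1 + eps0)"
  shows "(s * (eps0 * l1 - l2) + sqrt (l1 * l2)) / (s * (l1 * (1 + eps0) - l2))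
       = 1 - sqrt l1 / (s * (sqrt l2 + s * sqrt l1))"
proof -
  define a where "a = sqrt l1"
  define c where "c = sqrt l2"
  have "a > 0" "c > 0" "s > 1"
    using assms(1-3) by (simp_all add: a_def c_def s_def)
  have sq: "l1 = a\<^sup>2" "l2 = c\<^sup>2" "eps0 = s\<^sup>2 - 1" "sqrt (l1 * l2) = a * c"
    using assms(1-3) by (simp_all add: a_def c_def s_def real_sqrt_mult)
  have "s * a - c \<noteq> 0"
    using assms(4) by (auto simp: sq power_mult_distrib)
  moreover have "c + s * a > 0"
    using \<open>a > 0\<close> \<open>c > 0\<close> \<open>s > 1\<close> by (simp add: add_pos_pos)
  moreover have "s * (l1 * (1 + eps0) - l2) = s * (s * a - c) * (c + s * a)"
    by (simp add: sq algebra_simps power2_eq_square)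
  moreover have "s * (eps0 * l1 - l2) + sqrt (l1 * l2) = s * (s * a - c) * (c + s * a) - a * (s * a - c)"
    unfolding sq(4) by (simp add: sq(1-3) algebra_simps power2_eq_square)
  ultimately show ?thesis
    using \<open>s > 1\<close> unfolding a_def[symmetric] c_def[symmetric]
    by (simp add: diff_divide_distrib)
qed

lemma noma_exponent_at_optimum:
  fixes rho eps0 l1 l2 :: real
  assumes "rho > 0" and "eps0 > 0" and "0 < l1" and "l1 \<le> l2"
  defines "s \<equiv> sqrt (1 + eps0)"
  defines "b0 \<equiv> 1 - sqrt l1 / (s * (sqrt l2 + s * sqrt l1))"
  shows "noma_feasible eps0 b0" and "b0 \<noteq> 1"
    and "noma_exponent rho eps0 l1 l2 b0 = eps0 / rho * (sqrt l2 + sqrt ((1 + eps0) * l1))\<^sup>2"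
proof -
  define a where "a = sqrt l1"
  define c where "c = sqrt l2"
  define d where "d = c + s * a"
  define u where "u = c / d"
  define v where "v = a / (s * d)"
  have "a > 0" "c > 0" "s > 1" "a \<le> c"
    using assms(2-4) by (simp_all add: a_def c_def s_def)
  have "d > 0"
    using \<open>a > 0\<close> \<open>c > 0\<close> \<open>s > 1\<close> by (simp add: d_def add_pos_pos)
  have "u > 0" "v > 0"
    using \<open>a > 0\<close> \<open>c > 0\<close> \<open>s > 1\<close> \<open>d > 0\<close> by (simp_all add: u_def v_def)
  have "v \<le> u"
  proof -
    have "a \<le> s * c"
      using \<open>a \<le> c\<close> \<open>c > 0\<close> \<open>s > 1\<close> by (smt (verit) mult_le_cancel_right1)
    then show ?thesis
      using \<open>d > 0\<close> \<open>s > 1\<close> by (simp add: u_def v_def field_simps)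
  qed
  have v_eq: "1 - b0 = v"
    by (simp add: b0_def v_def d_def a_def c_def)
  have u_eq: "b0 - (1 - b0) * eps0 = u"
  proof -
    have "b0 - (1 - b0) * eps0 = 1 - (1 + eps0) * v"
      unfolding v_eq[symmetric] by (simp add: algebra_simps)
    also have "(1 + eps0) * v = s * a / d"
    proof -
      have "1 + eps0 = s * s"
        using assms(2) by (simp add: s_def)
      then show ?thesis
        using \<open>s > 1\<close> by (simp add: v_def)
    qed
    also have "1 - s * a / d = u"
      using \<open>d > 0\<close> by (simp add: u_def d_def field_simps)
    finally show ?thesis .
  qed
  show "noma_feasible eps0 b0"
    using u_eq v_eq \<open>u > 0\<close> \<open>v > 0\<close> assms(2) unfolding noma_feasible_def
    by (smt (verit) mult_pos_pos)
  show "b0 \<noteq> 1"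
    using v_eq \<open>v > 0\<close> by auto
  have A: "noma_A rho eps0 b0 = eps0 / (rho * u)"
    unfolding noma_A_def u_eq ..
  have B: "noma_B rho eps0 b0 = eps0 / (rho * v)"
    unfolding noma_B_def v_eq ..
  have "noma_A rho eps0 b0 \<le> noma_B rho eps0 b0"
    unfolding A B using \<open>v \<le> u\<close> \<open>v > 0\<close> assms(1,2) by (simp add: frac_le)
  then have "noma_exponent rho eps0 l1 l2 b0 = eps0 / rho * (c\<^sup>2 / u + a\<^sup>2 / v)"
    using \<open>u > 0\<close> \<open>v > 0\<close> assms(1,3,4)
    by (simp add: noma_exponent_def noma_zeta_def A B a_def c_def field_simps)
  also have "c\<^sup>2 / u + a\<^sup>2 / v = d\<^sup>2"
    using \<open>a > 0\<close> \<open>c > 0\<close> \<open>s > 1\<close> \<open>d > 0\<close>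
    by (simp add: u_def v_def d_def field_simps power2_eq_square)
  also have "d = sqrt l2 + sqrt ((1 + eps0) * l1)"
    by (simp add: d_def a_def c_def s_def real_sqrt_mult)
  finally show "noma_exponent rho eps0 l1 l2 b0 = eps0 / rho * (sqrt l2 + sqrt ((1 + eps0) * l1))\<^sup>2" .
qed

theorem corollary2:
  fixes rho eps0 l1 l2 :: real
  assumes "rho > 0" and "eps0 > 0" and "0 < l1" and "l1 < l2"
    and "l1 * (1 + eps0) \<noteq> l2"
  defines "bstar \<equiv> (sqrt (1 + eps0) * (eps0 * l1 - l2) + sqrt (l1 * l2))
                 / (sqrt (1 + eps0) * (l1 * (1 + eps0) - l2))"
  shows "noma_feasible eps0 bstar \<and>
         (\<forall>b. noma_feasible eps0 b \<longrightarrow> noma_obj rho eps0 l1 l2 bstar \<le> noma_obj rho eps0 l1 l2 b)"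
proof -
  have bstar: "bstar = 1 - sqrt l1 / (sqrt (1 + eps0) * (sqrt l2 + sqrt (1 + eps0) * sqrt l1))"
    unfolding bstar_def using noma_bstar_eq assms(2-5) by simp
  note optimum = noma_exponent_at_optimum[OF assms(1-3) less_imp_le[OF assms(4)], folded bstar]
  have "noma_obj rho eps0 l1 l2 bstar \<le> noma_obj rho eps0 l1 l2 b"
    if "noma_feasible eps0 b" for b
  proof (cases "b = 1")
    case False
    then have "noma_exponent rho eps0 l1 l2 bstar \<le> noma_exponent rho eps0 l1 l2 b"
      using optimum(3) noma_exponent_lower_bound[OF assms(1,2) _ _ that] assms(3,4) by simp
    then show ?thesis
      using optimum(2) False by (simp add: noma_obj_def flip: noma_exponent_def)
  qed (simp add: noma_obj_def optimum(2))
  with optimum(1) show ?thesis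
    by blast
qed

end
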